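(* Let $K$ be finite with $|K|\ge2$ and let $f^q:\mathcal{P}^n\to 2^K$ be a voting by quota with quotas $q=\{q_k\}_{k\in K}$, $1\le q_k\le n$. Then $f^q$ is NOM if and only if $2\le q_k\le n-1$ for each $k\in K$.
   Context: $N=\{1,\dots,n\}$, $n\ge2$; alternatives are subsets of $K$; $\mathcal{P}$ all strict linear orders on $2^K$; $t(P_i)$ the top of $P_i$. The voting by quota $f^q$ is defined by: $k\in f^q(P)$ iff $|\{i\in N:k\in t(P_i)\}|\ge q_k$. Option set $O(P_i)=\{f(P_i,P_{-i}):P_{-i}\in\mathcal{P}^{n-1}\}$. $P_i'$ is a manipulation at $P_i$ if $f(P_i',P_{-i})P_if(P_i,P_{-i})$ for some $P_{-i}$; it is obvious if the $P_i$-worst element of $O(P_i')$ is strictly $P_i$-better than that of $O(P_i)$, or the $P_i$-best element of $O(P_i')$ is strictly $P_i$-better than that of $O(P_i)$. NOM means no obvious manipulation exists. *)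

theory Defs
  imports Main
begin

text \<open>A preference over the alternatives 2^K is a strict
linear order R on Pow K; (x, y) \<in> R means "x is strictly preferred to y".
A profile is a map from agents to preferences (values outside {1..n} are ignored).\<close>

definition is_pref :: "'a set \<Rightarrow> ('a set \<times> 'a set) set \<Rightarrow> bool" where
  "is_pref K R \<longleftrightarrow> strict_linear_order_on (Pow K) R \<and> R \<subseteq> Pow K \<times> Pow K"

definition profiles :: "nat \<Rightarrow> 'a set \<Rightarrow> (nat \<Rightarrow> ('a set \<times> 'a set) set) set" where
  "profiles n K = {P. \<forall>i\<in>{1..n}. is_pref K (P i)}"

definition top_el :: "'a set \<Rightarrow> ('a set \<times> 'a set) set \<Rightarrow> 'a set" where
  "top_el K R = (THE x. x \<in> Pow K \<and> (\<forall>y\<in>Pow K. y \<noteq> x \<longrightarrow> (x, y) \<in> R))"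

definition quota_rule ::
  "nat \<Rightarrow> 'a set \<Rightarrow> ('a \<Rightarrow> nat) \<Rightarrow> (nat \<Rightarrow> ('a set \<times> 'a set) set) \<Rightarrow> 'a set" where
  "quota_rule n K q P = {k \<in> K. q k \<le> card {i \<in> {1..n}. k \<in> top_el K (P i)}}"

definition option_set ::
  "((nat \<Rightarrow> ('a set \<times> 'a set) set) \<Rightarrow> 'a set) \<Rightarrow> nat \<Rightarrow> 'a set \<Rightarrow> nat
    \<Rightarrow> ('a set \<times> 'a set) set \<Rightarrow> 'a set set" where
  "option_set f n K i R = {f (P(i := R)) | P. P \<in> profiles n K}"

definition best_el :: "('a set \<times> 'a set) set \<Rightarrow> 'a set set \<Rightarrow> 'a set" where
  "best_el R S = (THE x. x \<in> S \<and> (\<forall>y\<in>S. y \<noteq> x \<longrightarrow> (x, y) \<in> R))"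

definition worst_el :: "('a set \<times> 'a set) set \<Rightarrow> 'a set set \<Rightarrow> 'a set" where
  "worst_el R S = (THE x. x \<in> S \<and> (\<forall>y\<in>S. y \<noteq> x \<longrightarrow> (y, x) \<in> R))"

definition manipulation ::
  "((nat \<Rightarrow> ('a set \<times> 'a set) set) \<Rightarrow> 'a set) \<Rightarrow> nat \<Rightarrow> 'a set \<Rightarrow> nat
    \<Rightarrow> ('a set \<times> 'a set) set \<Rightarrow> ('a set \<times> 'a set) set \<Rightarrow> bool" where
  "manipulation f n K i R R' \<longleftrightarrow>
     (\<exists>P\<in>profiles n K. (f (P(i := R')), f (P(i := R))) \<in> R)"

definition obvious_manipulation ::
  "((nat \<Rightarrow> ('a set \<times> 'a set) set) \<Rightarrow> 'a set) \<Rightarrow> nat \<Rightarrow> 'a set \<Rightarrow> nat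
    \<Rightarrow> ('a set \<times> 'a set) set \<Rightarrow> ('a set \<times> 'a set) set \<Rightarrow> bool" where
  "obvious_manipulation f n K i R R' \<longleftrightarrow>
     manipulation f n K i R R' \<and>
     ((worst_el R (option_set f n K i R'), worst_el R (option_set f n K i R)) \<in> R \<or>
      (best_el R (option_set f n K i R'), best_el R (option_set f n K i R)) \<in> R)"

definition NOM ::
  "((nat \<Rightarrow> ('a set \<times> 'a set) set) \<Rightarrow> 'a set) \<Rightarrow> nat \<Rightarrow> 'a set \<Rightarrow> bool" where
  "NOM f n K \<longleftrightarrow>
     (\<forall>i\<in>{1..n}. \<forall>R R'. is_pref K R \<longrightarrow> is_pref K R' \<longrightarrow> \<not> obvious_manipulation f n K i R R')"

end

(* If every quota lies in [2, n-1], a single agent can be outvoted on every issue: whatever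
   agent i reports, the others, all reporting a common top S, make the outcome exactly S.
   So every option set is all of 2^K and no report changes its best or worst element.

   If q_k = 1 (resp. q_k = n), a single agent decides k: reporting a top that contains k
   (resp. omits k) forces the outcome to contain k (resp. omit it). An agent whose true top
   lies on the other side, but who ranks all such forced outcomes right after it, gets only
   forced outcomes by misreporting, whereas truthfully the others can push the outcome to a
   set below all of them; the worst option improves, an obvious manipulation. *)

theory Submission
  imports Defs "HOL-Library.Product_Lexorder"
begin

lemma is_prefD:
  assumes "is_pref K R"
  shows "trans R" "irrefl R" "total_on (Pow K) R"
  using assms unfolding is_pref_def strict_linear_order_on_def by auto

lemma is_pref_asym: "is_pref K R \<Longrightarrow> (x, y) \<in> R \<Longrightarrow> (y, x) \<notin> R"
  unfolding is_pref_def strict_linear_order_on_def trans_def irrefl_def by blast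

lemma top_el_eqI:
  assumes "is_pref K R" "t \<subseteq> K" "\<And>y. y \<subseteq> K \<Longrightarrow> y \<noteq> t \<Longrightarrow> (t, y) \<in> R"
  shows "top_el K R = t"
  unfolding top_el_def
proof (rule the_equality)
  show "t \<in> Pow K \<and> (\<forall>y\<in>Pow K. y \<noteq> t \<longrightarrow> (t, y) \<in> R)" using assms(2,3) by blast
  fix x assume x: "x \<in> Pow K \<and> (\<forall>y\<in>Pow K. y \<noteq> x \<longrightarrow> (x, y) \<in> R)"
  show "x = t"
  proof (rule ccontr)
    assume "x \<noteq> t"
    then have "(x, t) \<in> R" "(t, x) \<in> R" using x assms(2,3) by blast+
    then show False using is_pref_asym[OF assms(1)] by blast
  qed
qed

lemma worst_el_eqI:
  assumes "is_pref K R" "w \<in> S" "\<And>y. y \<in> S \<Longrightarrow> y \<noteq> w \<Longrightarrow> (y, w) \<in> R"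
  shows "worst_el R S = w"
  unfolding worst_el_def
proof (rule the_equality)
  show "w \<in> S \<and> (\<forall>y\<in>S. y \<noteq> w \<longrightarrow> (y, w) \<in> R)" using assms(2,3) by blast
  fix x assume x: "x \<in> S \<and> (\<forall>y\<in>S. y \<noteq> x \<longrightarrow> (y, x) \<in> R)"
  show "x = w"
  proof (rule ccontr)
    assume "x \<noteq> w"
    then have "(x, w) \<in> R" "(w, x) \<in> R" using x assms(2,3) by blast+
    then show False using is_pref_asym[OF assms(1)] by blast
  qed
qed

lemma ex_worst:
  assumes "is_pref K R" "finite S" "S \<noteq> {}" "S \<subseteq> Pow K"
  shows "\<exists>w\<in>S. \<forall>y\<in>S. y \<noteq> w \<longrightarrow> (y, w) \<in> R"
  using assms(2-4)
proof (induction S rule: finite_ne_induct)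
  case (insert a S)
  then obtain w where w: "w \<in> S" "\<forall>y\<in>S. y \<noteq> w \<longrightarrow> (y, w) \<in> R" by auto
  show ?case
  proof (cases "(w, a) \<in> R")
    case True
    then have "\<forall>y\<in>S. (y, a) \<in> R"
      using w is_prefD(1)[OF assms(1)] by (metis transD)
    then show ?thesis by blast
  next
    case False
    have "a \<noteq> w" using w insert.hyps by auto
    moreover have "a \<in> Pow K" "w \<in> Pow K" using w insert.prems by auto
    ultimately have "(a, w) \<in> R"
      using False is_prefD(3)[OF assms(1)] unfolding total_on_def by blast
    then show ?thesis using w by blast
  qed
qed simp

lemma worst_el:
  assumes "is_pref K R" "finite S" "S \<noteq> {}" "S \<subseteq> Pow K"
  shows "worst_el R S \<in> S" "\<And>y. y \<in> S \<Longrightarrow> y \<noteq> worst_el R S \<Longrightarrow> (y, worst_el R S) \<in> R"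
  using ex_worst[OF assms] worst_el_eqI[OF assms(1)] by metis+

lemma worst_el_better:
  assumes "is_pref K R" "finite S" "finite S'" "S \<subseteq> Pow K" "S' \<subseteq> Pow K" "S' \<noteq> {}"
    and "w \<in> S" "\<forall>x\<in>S'. (x, w) \<in> R"
  shows "(worst_el R S', worst_el R S) \<in> R"
proof -
  have "S \<noteq> {}" using assms(7) by auto
  note worst = worst_el[OF assms(1,2) this assms(4)]
  have "(worst_el R S', w) \<in> R" using worst_el(1)[OF assms(1,3,6,5)] assms(8) by blast
  moreover have "w = worst_el R S \<or> (w, worst_el R S) \<in> R" using worst assms(7) by blast
  ultimately show ?thesis using is_prefD(1)[OF assms(1)] by (metis transD)
qed

lemma ex_pref_refining:
  fixes r :: "'a set \<Rightarrow> 'b::linorder"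
  assumes "finite K"
  obtains R where "is_pref K R" "\<And>x y. x \<subseteq> K \<Longrightarrow> y \<subseteq> K \<Longrightarrow> r x < r y \<Longrightarrow> (x, y) \<in> R"
proof -
  obtain h :: "'a set \<Rightarrow> nat" where h: "inj_on h (Pow K)"
    using finite_imp_inj_to_nat_seg assms by blast
  define g where "g x = (r x, h x)" for x
  define R where "R = {(x, y). x \<in> Pow K \<and> y \<in> Pow K \<and> g x < g y}"
  have "inj_on g (Pow K)" using h by (auto simp: g_def inj_on_def)
  have "total_on (Pow K) R"
  proof (rule total_onI)
    fix x y assume xy: "x \<in> Pow K" "y \<in> Pow K" "x \<noteq> y"
    then have "g x \<noteq> g y" using inj_onD[OF \<open>inj_on g (Pow K)\<close>] by blast
    then show "(x, y) \<in> R \<or> (y, x) \<in> R" using xy(1,2) by (simp add: R_def neq_iff)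
  qed
  then have "is_pref K R"
    unfolding is_pref_def strict_linear_order_on_def trans_def irrefl_def R_def by auto
  moreover have "(x, y) \<in> R" if "x \<subseteq> K" "y \<subseteq> K" "r x < r y" for x y
    using that by (simp add: R_def g_def)
  ultimately show thesis using that by blast
qed

lemma ex_pref_with_top:
  assumes "finite K" "t \<subseteq> K"
  obtains R where "is_pref K R" "top_el K R = t"
proof -
  obtain R where R: "is_pref K R" "\<And>x y. x \<subseteq> K \<Longrightarrow> y \<subseteq> K \<Longrightarrow> (x \<noteq> t) < (y \<noteq> t) \<Longrightarrow> (x, y) \<in> R"
    using ex_pref_refining[OF assms(1), of "\<lambda>x. x \<noteq> t"] by blast
  have "top_el K R = t"
  proof (rule top_el_eqI[OF R(1) assms(2)])
    fix y assume "y \<subseteq> K" "y \<noteq> t"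
    then show "(t, y) \<in> R" using R(2)[of t y] assms(2) by simp
  qed
  with R(1) show thesis using that by blast
qed

lemma ex_pref_top_then_favoured:
  assumes "finite K" "t \<subseteq> K" "\<not> fav t"
  obtains R where "is_pref K R" "top_el K R = t"
    "\<And>x y. x \<subseteq> K \<Longrightarrow> y \<subseteq> K \<Longrightarrow> fav x \<Longrightarrow> \<not> fav y \<Longrightarrow> y \<noteq> t \<Longrightarrow> (x, y) \<in> R"
proof -
  define tier where "tier x = (if x = t then 0 else if fav x then 1 else 2::nat)" for x
  obtain R where R: "is_pref K R" "\<And>x y. x \<subseteq> K \<Longrightarrow> y \<subseteq> K \<Longrightarrow> tier x < tier y \<Longrightarrow> (x, y) \<in> R"
    using ex_pref_refining[OF assms(1), of tier] by blast
  have "top_el K R = t"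
  proof (rule top_el_eqI[OF R(1) assms(2)])
    fix y assume "y \<subseteq> K" "y \<noteq> t"
    then show "(t, y) \<in> R" using R(2)[of t y] assms(2) by (simp add: tier_def)
  qed
  moreover have "(x, y) \<in> R" if "x \<subseteq> K" "y \<subseteq> K" "fav x" "\<not> fav y" "y \<noteq> t" for x y
  proof (rule R(2)[OF that(1,2)])
    have "x \<noteq> t" using that(3) assms(3) by metis
    then show "tier x < tier y" using that(3-5) by (simp add: tier_def)
  qed
  ultimately show thesis using that R(1) by blast
qed

lemma card_supporters:
  assumes "i \<in> {1..n}" "\<And>j. j \<in> {1..n} \<Longrightarrow> j \<noteq> i \<Longrightarrow> Q j \<longleftrightarrow> c"
  shows "card {j \<in> {1..n::nat}. Q j} = of_bool (Q i) + (if c then n - 1 else 0)"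
proof -
  have "{j \<in> {1..n}. Q j} = (if Q i then {i} else {}) \<union> (if c then {1..n} - {i} else {})"
    using assms by (cases "Q i"; cases c) (auto, metis)
  also have "card \<dots> = of_bool (Q i) + (if c then n - 1 else 0)"
    using assms(1) by (subst card_Un_disjoint) auto
  finally show ?thesis .
qed

lemma quota_rule_single_deviator:
  assumes "i \<in> {1..n}"
  shows "quota_rule n K q ((\<lambda>_. R0)(i := R)) =
    {x \<in> K. q x \<le> of_bool (x \<in> top_el K R) + (if x \<in> top_el K R0 then n - 1 else 0)}"
proof -
  have "card {j \<in> {1..n}. x \<in> top_el K (((\<lambda>_. R0)(i := R)) j)} =
      of_bool (x \<in> top_el K R) + (if x \<in> top_el K R0 then n - 1 else 0)" for x
    using card_supporters[where Q = "\<lambda>j. x \<in> top_el K (((\<lambda>_. R0)(i := R)) j)"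
        and c = "x \<in> top_el K R0", OF assms] by simp
  then show ?thesis unfolding quota_rule_def by simp
qed

lemma quota_rule_mem_if_quota_one:
  assumes "i \<in> {1..n}" "k \<in> K" "q k \<le> 1" "k \<in> top_el K (P i)"
  shows "k \<in> quota_rule n K q P"
proof -
  have "{j \<in> {1..n}. k \<in> top_el K (P j)} \<noteq> {}" using assms by auto
  then have "1 \<le> card {j \<in> {1..n}. k \<in> top_el K (P j)}"
    by (simp add: Suc_le_eq card_gt_0_iff)
  then show ?thesis using assms unfolding quota_rule_def by auto
qed

lemma quota_rule_not_mem_if_quota_n:
  assumes "i \<in> {1..n}" "n \<le> q k" "k \<notin> top_el K (P i)"
  shows "k \<notin> quota_rule n K q P"
proof -
  have "card {j \<in> {1..n}. k \<in> top_el K (P j)} \<le> card ({1..n} - {i})"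
    using assms by (intro card_mono) auto
  then show ?thesis using assms unfolding quota_rule_def by auto
qed

lemma quota_rule_extreme_quota_decisive:
  assumes "i \<in> {1..n}" "k \<in> K" "q k = 1 \<or> q k = n" "k \<in> top_el K (P i) \<longleftrightarrow> q k = 1"
  shows "k \<in> quota_rule n K q P \<longleftrightarrow> q k = 1"
proof (cases "q k = 1")
  case True
  then show ?thesis using quota_rule_mem_if_quota_one[of i n k K q P] assms by simp
next
  case False
  then show ?thesis using quota_rule_not_mem_if_quota_n[of i n q k K P] assms by simp
qed

lemma NOM_if_option_set_independent:
  assumes "\<And>i R R'. i \<in> {1..n} \<Longrightarrow> is_pref K R \<Longrightarrow> is_pref K R' \<Longrightarrow>
    option_set f n K i R' = option_set f n K i R"
  shows "NOM f n K"
  unfolding NOM_def obvious_manipulation_def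
proof (intro ballI allI impI notI)
  fix i R R' assume "i \<in> {1..n}" "is_pref K R" "is_pref K R'"
    and om: "manipulation f n K i R R' \<and>
      ((worst_el R (option_set f n K i R'), worst_el R (option_set f n K i R)) \<in> R \<or>
       (best_el R (option_set f n K i R'), best_el R (option_set f n K i R)) \<in> R)"
  then have "option_set f n K i R' = option_set f n K i R" using assms by blast
  then show False using om is_prefD(2)[OF \<open>is_pref K R\<close>] by (simp add: irrefl_def)
qed

lemma obvious_manipulationI:
  assumes "is_pref K R" "finite K" "\<And>P. f P \<subseteq> K" "P0 \<in> profiles n K"
    and "\<And>P. P \<in> profiles n K \<Longrightarrow> (f (P(i := R')), f (P0(i := R))) \<in> R"
  shows "obvious_manipulation f n K i R R'"
proof -
  have sub: "option_set f n K i R'' \<subseteq> Pow K" for R'' using assms(3) by (auto simp: option_set_def)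
  have "(worst_el R (option_set f n K i R'), worst_el R (option_set f n K i R)) \<in> R"
  proof (rule worst_el_better[OF assms(1) _ _ sub sub])
    show "finite (option_set f n K i R)" "finite (option_set f n K i R')"
      using sub assms(2) by (meson finite_Pow_iff finite_subset)+
    show "option_set f n K i R' \<noteq> {}" "f (P0(i := R)) \<in> option_set f n K i R"
      using assms(4) by (auto simp: option_set_def)
    show "\<forall>x\<in>option_set f n K i R'. (x, f (P0(i := R))) \<in> R"
      using assms(5) by (auto simp: option_set_def)
  qed
  moreover have "manipulation f n K i R R'"
    unfolding manipulation_def using assms(4,5) by blast
  ultimately show ?thesis unfolding obvious_manipulation_def by blast
qed

lemma const_in_profiles: "is_pref K R \<Longrightarrow> (\<lambda>_. R) \<in> profiles n K"
  by (simp add: profiles_def)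

lemma option_set_quota_rule_eq_Pow:
  assumes "finite K" "i \<in> {1..n}" "\<forall>k\<in>K. 2 \<le> q k \<and> q k \<le> n - 1"
  shows "option_set (quota_rule n K q) n K i R = Pow K"
proof
  show "option_set (quota_rule n K q) n K i R \<subseteq> Pow K"
    by (auto simp: option_set_def quota_rule_def)
next
  show "Pow K \<subseteq> option_set (quota_rule n K q) n K i R"
  proof
    fix S assume "S \<in> Pow K"
    then obtain R0 where R0: "is_pref K R0" "top_el K R0 = S"
      using ex_pref_with_top assms(1) by blast
    have "quota_rule n K q ((\<lambda>_. R0)(i := R)) = S"
      using assms(3) \<open>S \<in> Pow K\<close>
      by (force simp: quota_rule_single_deviator[OF assms(2)] R0(2))
    then show "S \<in> option_set (quota_rule n K q) n K i R"
      unfolding option_set_def using const_in_profiles[OF R0(1)] by force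
  qed
qed

lemma quota_rule_obvious_manipulation:
  assumes "finite K" "k \<in> K" "j \<in> K" "j \<noteq> k" "n \<ge> 2"
    and "\<forall>x\<in>K. 1 \<le> q x \<and> q x \<le> n" "q k = 1 \<or> q k = n"
  obtains R R' where "is_pref K R" "is_pref K R'" "obvious_manipulation (quota_rule n K q) n K 1 R R'"
proof -
  let ?f = "quota_rule n K q"
  have one: "1 \<in> {1..n}" using assms(5) by simp
  define b where "b \<longleftrightarrow> q k = 1"
  define fav where "fav x \<longleftrightarrow> (k \<in> x \<longleftrightarrow> b)" for x :: "'a set"
  \<comment> \<open>Agent 1 puts \<open>j\<close> into the true top \<open>t\<close> exactly when the others can outvote it,
    so that the truthful outcome \<open>w\<close> below differs from \<open>t\<close>.\<close>
  define t where "t = (if b then {} else {k}) \<union> (if 2 \<le> q j then {j} else {})"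
  define T where "T = (if b then {} else {k}) \<union> (if 2 \<le> q j then {} else {j})"
  define t' where "t' = (if b then {k} else {})"
  have tK: "t \<subseteq> K" "T \<subseteq> K" "t' \<subseteq> K" using assms(2,3) by (auto simp: t_def T_def t'_def)
  have "\<not> fav t" using assms(4) by (auto simp: fav_def t_def)
  then obtain R where R: "is_pref K R" "top_el K R = t"
    "\<And>x y. x \<subseteq> K \<Longrightarrow> y \<subseteq> K \<Longrightarrow> fav x \<Longrightarrow> \<not> fav y \<Longrightarrow> y \<noteq> t \<Longrightarrow> (x, y) \<in> R"
    using ex_pref_top_then_favoured[OF assms(1) tK(1)] by blast
  obtain R' where R': "is_pref K R'" "top_el K R' = t'" using ex_pref_with_top assms(1) tK by blast
  obtain R0 where R0: "is_pref K R0" "top_el K R0 = T" using ex_pref_with_top assms(1) tK by blast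
  have fav_R': "fav (?f (P(1 := R')))" for P
    using quota_rule_extreme_quota_decisive[where q = q and P = "P(1 := R')", OF one assms(2,7)] R'(2)
    by (simp add: fav_def b_def t'_def)
  define w where "w = ?f ((\<lambda>_. R0)(1 := R))"
  have w: "x \<in> w \<longleftrightarrow> x \<in> K \<and> q x \<le> of_bool (x \<in> t) + (if x \<in> T then n - 1 else 0)" for x
    unfolding w_def quota_rule_single_deviator[OF one] R(2) R0(2) by simp
  have "k \<in> t \<longleftrightarrow> \<not> b" "k \<in> T \<longleftrightarrow> \<not> b" "j \<in> t \<longleftrightarrow> 2 \<le> q j" "j \<in> T \<longleftrightarrow> \<not> 2 \<le> q j"
    using assms(4) by (auto simp: t_def T_def)
  then have "k \<in> w \<longleftrightarrow> \<not> b" "j \<in> w \<longleftrightarrow> j \<notin> t"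
    using w assms(2,3,5,6,7) by (auto simp: b_def)
  then have "\<not> fav w" "w \<noteq> t" by (auto simp: fav_def)
  have "obvious_manipulation ?f n K 1 R R'"
  proof (rule obvious_manipulationI[OF R(1) assms(1) _ const_in_profiles[OF R0(1)]], fold w_def)
    show "?f P \<subseteq> K" for P by (auto simp: quota_rule_def)
    then show "(?f (P(1 := R')), w) \<in> R" for P
      using R(3) fav_R' \<open>\<not> fav w\<close> \<open>w \<noteq> t\<close> by (simp add: w_def)
  qed
  with R(1) R'(1) show thesis using that by blast
qed

theorem corollary3:
  fixes K :: "'a set" and n :: nat and q :: "'a \<Rightarrow> nat"
  assumes "finite K" and "card K \<ge> 2" and "n \<ge> 2"
    and "\<forall>k\<in>K. 1 \<le> q k \<and> q k \<le> n"
  shows "NOM (quota_rule n K q) n K \<longleftrightarrow> (\<forall>k\<in>K. 2 \<le> q k \<and> q k \<le> n - 1)"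
proof
  assume "\<forall>k\<in>K. 2 \<le> q k \<and> q k \<le> n - 1"
  then show "NOM (quota_rule n K q) n K"
    using option_set_quota_rule_eq_Pow[OF assms(1)] by (intro NOM_if_option_set_independent) simp
next
  assume NOM: "NOM (quota_rule n K q) n K"
  show "\<forall>k\<in>K. 2 \<le> q k \<and> q k \<le> n - 1"
  proof (rule ccontr)
    assume "\<not> (\<forall>k\<in>K. 2 \<le> q k \<and> q k \<le> n - 1)"
    then obtain k where k: "k \<in> K" "q k = 1 \<or> q k = n" using assms(4) by force
    have "card (K - {k}) \<ge> 1" using assms(1,2) k(1) by simp
    then have "K - {k} \<noteq> {}" by (metis card.empty not_one_le_zero)
    then obtain j where "j \<in> K" "j \<noteq> k" by blast
    then obtain R R' where "is_pref K R" "is_pref K R'" "obvious_manipulation (quota_rule n K q) n K 1 R R'"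
      using quota_rule_obvious_manipulation[OF assms(1) k(1) _ _ assms(3,4) k(2)] by blast
    moreover have "1 \<in> {1..n}" using assms(3) by simp
    ultimately show False using NOM unfolding NOM_def by blast
  qed
qed

end
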